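(* Let $n$ be a non-negative integer. Every closed subgroup of $\mathbb{R}^n$ is reversible as a topological space.
   Context: A topological space $X$ is reversible if every continuous bijection of $X$ onto itself is open (i.e. a homeomorphism). $\mathbb{R}^n$ carries the Euclidean topology. *)

theory Defs
  imports "HOL-Analysis.Analysis"
begin

definition reversible :: "'a topology \<Rightarrow> bool" where
  "reversible X \<longleftrightarrow>
     (\<forall>f. continuous_map X X f \<and> bij_betw f (topspace X) (topspace X) \<longrightarrow> open_map X X f)"

definition additive_subgroup :: "'a::ab_group_add set \<Rightarrow> bool" where
  "additive_subgroup G \<longleftrightarrow> 0 \<in> G \<and> (\<forall>x\<in>G. \<forall>y\<in>G. x + y \<in> G) \<and> (\<forall>x\<in>G. - x \<in> G)"

end

theory Submission
  imports Defs
begin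

text \<open>Let \<open>L\<close> be the set of \<open>v\<close> with \<open>\<real>v \<subseteq> G\<close>, the largest linear subspace contained in
  \<open>G\<close>. Because \<open>G\<close> is closed, \<open>L\<close> contains every sufficiently short element of \<open>G\<close>:
  otherwise \<open>G\<close> has arbitrarily short nonzero elements orthogonal to \<open>L\<close>, and their integer
  multiples fill out, in the limit, the whole line through an accumulation point of their
  directions, which therefore lies in \<open>L\<close> while being orthogonal to \<open>L\<close>. So near each of
  its points \<open>G\<close> is a translate of an open piece of \<open>L\<close>. In these charts a continuous
  injection \<open>G \<rightarrow> G\<close> becomes a continuous injection from an open subset of \<open>L\<close> into \<open>L\<close>,
  which is open by invariance of domain.\<close>

lemma additive_subgroup_add:
  "additive_subgroup G \<Longrightarrow> x \<in> G \<Longrightarrow> y \<in> G \<Longrightarrow> x + y \<in> G"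
  unfolding additive_subgroup_def by blast

lemma additive_subgroup_diff:
  fixes G :: "'a::ab_group_add set"
  assumes "additive_subgroup G" "x \<in> G" "y \<in> G"
  shows "x - y \<in> G"
  using assms unfolding additive_subgroup_def by (metis diff_conv_add_uminus)

lemma additive_subgroup_scaleR_of_nat:
  fixes x :: "'a::real_vector"
  assumes G: "additive_subgroup G" and x: "x \<in> G"
  shows "real n *\<^sub>R x \<in> G"
proof (induction n)
  case 0
  then show ?case using G by (simp add: additive_subgroup_def)
next
  case (Suc n)
  then show ?case using additive_subgroup_add[OF G x Suc] by (simp add: algebra_simps)
qed

lemma additive_subgroup_scaleR_of_int:
  fixes x :: "'a::real_vector"
  assumes G: "additive_subgroup G" and x: "x \<in> G"
  shows "real_of_int k *\<^sub>R x \<in> G"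
proof (cases "k \<ge> 0")
  case True
  then show ?thesis using additive_subgroup_scaleR_of_nat[OF G x, of "nat k"] by simp
next
  case False
  then have "real_of_int k *\<^sub>R x = - (real (nat (- k)) *\<^sub>R x)" by simp
  moreover have "- (real (nat (- k)) *\<^sub>R x) \<in> G"
    using G additive_subgroup_scaleR_of_nat[OF G x] unfolding additive_subgroup_def by blast
  ultimately show ?thesis by simp
qed

definition lineality_space :: "'a::real_vector set \<Rightarrow> 'a set" where
  "lineality_space G = {v. \<forall>t. t *\<^sub>R v \<in> G}"

lemma lineality_space_subset: "lineality_space G \<subseteq> G"
  unfolding lineality_space_def by (force dest: spec[of _ 1])

lemma subspace_lineality_space:
  assumes G: "additive_subgroup G"
  shows "subspace (lineality_space G)"
  unfolding subspace_def lineality_space_def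
proof (intro conjI allI ballI)
  show "0 \<in> {v. \<forall>t. t *\<^sub>R v \<in> G}" using G by (simp add: additive_subgroup_def)
next
  fix x y assume "x \<in> {v. \<forall>t. t *\<^sub>R v \<in> G}" "y \<in> {v. \<forall>t. t *\<^sub>R v \<in> G}"
  then show "x + y \<in> {v. \<forall>t. t *\<^sub>R v \<in> G}"
    using additive_subgroup_add[OF G] by (simp add: scaleR_add_right)
next
  fix c :: real and x assume "x \<in> {v. \<forall>t. t *\<^sub>R v \<in> G}"
  then have "(t * c) *\<^sub>R x \<in> G" for t by blast
  then show "c *\<^sub>R x \<in> {v. \<forall>t. t *\<^sub>R v \<in> G}" by simp
qed

text \<open>The integer multiples \<open>\<lfloor>t / \<parallel>w\<^sub>n\<parallel>\<rfloor> w\<^sub>n\<close> of short elements of \<open>G\<close> approximate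
  \<open>t l\<close> to within \<open>\<parallel>w\<^sub>n\<parallel>\<close>.\<close>
lemma closed_subgroup_limit_direction:
  fixes G :: "'a::real_normed_vector set"
  assumes G: "additive_subgroup G" and cl: "closed G"
    and w: "\<And>n. w n \<in> G" "\<And>n. w n \<noteq> 0" and w0: "w \<longlonglongrightarrow> 0"
    and l: "(\<lambda>n. sgn (w n)) \<longlonglongrightarrow> l"
  shows "l \<in> lineality_space G"
  unfolding lineality_space_def
proof (intro CollectI allI)
  fix t :: real
  define k where "k n = \<lfloor>t / norm (w n)\<rfloor>" for n
  have approx: "norm (real_of_int (k n) *\<^sub>R w n - t *\<^sub>R sgn (w n)) \<le> norm (w n)" for n
  proof -
    have "real_of_int (k n) *\<^sub>R w n - t *\<^sub>R sgn (w n) = (real_of_int (k n) - t / norm (w n)) *\<^sub>R w n"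
      by (simp add: sgn_div_norm algebra_simps divide_inverse)
    moreover have "\<bar>real_of_int (k n) - t / norm (w n)\<bar> \<le> 1"
      unfolding k_def by linarith
    ultimately show ?thesis by (simp add: mult_left_le_one_le)
  qed
  have "(\<lambda>n. real_of_int (k n) *\<^sub>R w n - t *\<^sub>R sgn (w n)) \<longlonglongrightarrow> 0"
    by (rule tendsto_norm_zero_cancel, rule Lim_null_comparison[OF _ tendsto_norm_zero[OF w0]])
      (simp add: approx)
  from tendsto_add[OF this tendsto_scaleR[OF tendsto_const l, of t]]
  have "(\<lambda>n. real_of_int (k n) *\<^sub>R w n) \<longlonglongrightarrow> t *\<^sub>R l" by simp
  then show "t *\<^sub>R l \<in> G"
    by (rule closed_sequentially[OF cl, rotated]) (rule additive_subgroup_scaleR_of_int[OF G w(1)])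
qed

lemma additive_subgroup_orthogonal_component:
  fixes G :: "'a::euclidean_space set"
  assumes G: "additive_subgroup G" and V: "subspace V" "V \<subseteq> G" and g: "g \<in> G"
  obtains z where "z \<in> G" "g - z \<in> V" "norm z \<le> norm g" "\<And>v. v \<in> V \<Longrightarrow> orthogonal z v"
proof -
  obtain y z where y: "y \<in> span V" and z: "\<And>v. v \<in> span V \<Longrightarrow> orthogonal z v"
    and g_eq: "g = y + z"
    using orthogonal_subspace_decomp_exists[of V g] by blast
  have span_V: "span V = V" using V(1) by (rule span_eq_iff[THEN iffD2])
  have yV: "y \<in> V" using y span_V by simp
  have "z \<in> G" using additive_subgroup_diff[OF G g] yV V(2) g_eq by force
  moreover have "norm z \<le> norm g"
  proof -
    have "norm g ^ 2 = norm y ^ 2 + norm z ^ 2"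
      using z[OF y] g_eq norm_add_Pythagorean by (metis orthogonal_commute)
    then show ?thesis by (simp add: power2_le_imp_le)
  qed
  ultimately show ?thesis using that z yV g_eq span_V by simp
qed

lemma closed_subgroup_small_in_lineality_space:
  fixes G :: "'a::euclidean_space set"
  assumes G: "additive_subgroup G" and cl: "closed G"
  shows "\<exists>r>0. \<forall>g\<in>G. norm g < r \<longrightarrow> g \<in> lineality_space G"
proof (rule ccontr)
  let ?L = "lineality_space G"
  assume "\<not> ?thesis"
  then have "\<exists>g\<in>G. norm g < inverse (Suc n) \<and> g \<notin> ?L" for n
    by (metis inverse_positive_iff_positive of_nat_0_less_iff zero_less_Suc)
  then obtain g where g: "\<And>n. g n \<in> G" "\<And>n. norm (g n) < inverse (Suc n)" "\<And>n. g n \<notin> ?L"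
    by metis
  have "\<forall>n. \<exists>z. z \<in> G \<and> z \<noteq> 0 \<and> norm z \<le> norm (g n) \<and> (\<forall>v\<in>?L. orthogonal z v)"
  proof
    fix n
    obtain z where "z \<in> G" "g n - z \<in> ?L" "norm z \<le> norm (g n)" "\<And>v. v \<in> ?L \<Longrightarrow> orthogonal z v"
      using additive_subgroup_orthogonal_component[OF G subspace_lineality_space[OF G]
          lineality_space_subset g(1)[of n]] by blast
    moreover have "z \<noteq> 0" using g(3) \<open>g n - z \<in> ?L\<close> by auto
    ultimately show "\<exists>z. z \<in> G \<and> z \<noteq> 0 \<and> norm z \<le> norm (g n) \<and> (\<forall>v\<in>?L. orthogonal z v)"
      by blast
  qed
  from choice[OF this] obtain w
    where "\<forall>n. w n \<in> G \<and> w n \<noteq> 0 \<and> norm (w n) \<le> norm (g n) \<and> (\<forall>v\<in>?L. orthogonal (w n) v)"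
    by blast
  then have w: "\<And>n. w n \<in> G" "\<And>n. w n \<noteq> 0" "\<And>n. norm (w n) \<le> norm (g n)"
    and w_orth: "\<And>n v. v \<in> ?L \<Longrightarrow> orthogonal (w n) v"
    by auto
  have w_small: "norm (norm (w n)) \<le> inverse (real (Suc n))" for n
    using w(3)[of n] g(2)[of n] by simp
  have w0: "w \<longlonglongrightarrow> 0"
    by (rule tendsto_norm_zero_cancel, rule Lim_null_comparison[OF _ LIMSEQ_inverse_real_of_nat])
      (intro always_eventually allI w_small)
  have "\<forall>n. sgn (w n) \<in> sphere 0 1" using w(2) by (simp add: norm_sgn)
  then obtain l s where l: "l \<in> sphere 0 1" and s: "strict_mono s"
    and "((\<lambda>n. sgn (w n)) \<circ> s) \<longlonglongrightarrow> l"
    by (rule seq_compactE[OF compact_imp_seq_compact[OF compact_sphere]])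
  then have lim: "(\<lambda>n. sgn (w (s n))) \<longlonglongrightarrow> l" by (simp add: o_def)
  have "l \<in> ?L"
    by (rule closed_subgroup_limit_direction[OF G cl, of "\<lambda>n. w (s n)"])
      (use w lim LIMSEQ_subseq_LIMSEQ[OF w0 s] in \<open>simp_all add: o_def\<close>)
  then have "inner (sgn (w n)) l = 0" for n
    using w_orth[of l n] by (simp add: sgn_div_norm orthogonal_def)
  then have "(\<lambda>n. inner (sgn (w (s n))) l) \<longlonglongrightarrow> 0" by simp
  moreover have "(\<lambda>n. inner (sgn (w (s n))) l) \<longlonglongrightarrow> inner l l"
    using lim by (intro tendsto_inner tendsto_const)
  ultimately have "inner l l = 0" using LIMSEQ_unique by blast
  then show False using l by simp
qed

locale locally_linear_subgroup =
  fixes G :: "'a::euclidean_space set" and V :: "'a set" and r :: real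
  assumes subgroup: "additive_subgroup G"
    and subspace: "subspace V" and subspace_subset: "V \<subseteq> G"
    and radius_pos: "r > 0"
    and small_in_subspace: "\<And>g. g \<in> G \<Longrightarrow> norm g < r \<Longrightarrow> g \<in> V"
begin

lemma ball_eq_translation:
  assumes x: "x \<in> G"
  shows "G \<inter> ball x r = (+) x ` (V \<inter> ball 0 r)"
proof (intro equalityI subsetI)
  fix y assume y: "y \<in> G \<inter> ball x r"
  then have "y - x \<in> V \<inter> ball 0 r"
    using small_in_subspace additive_subgroup_diff[OF subgroup _ x]
    by (auto simp: dist_norm norm_minus_commute)
  then show "y \<in> (+) x ` (V \<inter> ball 0 r)" by (force intro: image_eqI[where x = "y - x"])
next
  fix y assume "y \<in> (+) x ` (V \<inter> ball 0 r)"
  then show "y \<in> G \<inter> ball x r"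
    using additive_subgroup_add[OF subgroup x] subspace_subset by (auto simp: dist_norm)
qed

lemma openin_translation_image:
  assumes x: "x \<in> G" and W: "openin (top_of_set V) W" "W \<subseteq> ball 0 r"
  shows "openin (top_of_set G) ((+) x ` W)"
proof -
  obtain T where T: "open T" "W = V \<inter> T" using W(1) by (auto simp: openin_open)
  then have "W = V \<inter> ball 0 r \<inter> T" using W(2) by blast
  then have "(+) x ` W = (+) x ` (V \<inter> ball 0 r) \<inter> (+) x ` T" by (simp only: translation_Int)
  also have "\<dots> = G \<inter> (ball x r \<inter> (+) x ` T)"
    by (simp only: ball_eq_translation[OF x, symmetric] Int_assoc)
  finally have "(+) x ` W = G \<inter> (ball x r \<inter> (+) x ` T)" .
  then show ?thesis by (simp add: openin_open_Int open_Int open_translation T(1))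
qed

lemma openin_translation_preimage:
  assumes x: "x \<in> G" and A: "openin (top_of_set G) A"
  shows "openin (top_of_set V) {v \<in> V. x + v \<in> A}"
proof -
  obtain T where T: "open T" "A = G \<inter> T" using A by (auto simp: openin_open)
  then have "{v \<in> V. x + v \<in> A} = V \<inter> (+) x -` T"
    using additive_subgroup_add[OF subgroup x] subspace_subset by auto
  moreover have "open ((+) x -` T)" using T(1) by (intro open_vimage continuous_intros)
  ultimately show ?thesis by (simp add: openin_open_Int)
qed

lemma continuous_inj_image_neighbourhood:
  assumes contf: "continuous_on G f" and fG: "f ` G \<subseteq> G" and injf: "inj_on f G"
    and U: "openin (top_of_set G) U" and x: "x \<in> U"
  shows "\<exists>T. openin (top_of_set G) T \<and> f x \<in> T \<and> T \<subseteq> f ` U"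
proof -
  have xG: "x \<in> G" using x U openin_imp_subset by blast
  have fxG: "f x \<in> G" using fG xG by blast
  define A where "A = U \<inter> ball x r \<inter> (G \<inter> f -` ball (f x) r)"
  define S where "S = {v \<in> V. x + v \<in> A}"
  define h where "h v = f (x + v) - f x" for v
  have "openin (top_of_set G) A"
    unfolding A_def
    by (intro openin_Int openin_Int_open U continuous_openin_preimage_gen contf open_ball)
  then have S_open: "openin (top_of_set V) S"
    unfolding S_def by (rule openin_translation_preimage[OF xG])
  have SA: "x + v \<in> A" if "v \<in> S" for v using that by (simp add: S_def)
  have h_into: "h v \<in> V \<inter> ball 0 r" if "v \<in> S" for v
  proof -
    have "f (x + v) \<in> G \<inter> ball (f x) r" using SA[OF that] fG by (auto simp: A_def)
    then show ?thesis using ball_eq_translation[OF fxG] by (auto simp: h_def)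
  qed
  have "continuous_on S h"
    unfolding h_def using SA
    by (intro continuous_intros continuous_on_compose2[OF contf]) (auto simp: A_def)
  moreover have "inj_on h S"
  proof (rule inj_onI)
    fix u v assume "u \<in> S" "v \<in> S" "h u = h v"
    then have "f (x + u) = f (x + v)" "x + u \<in> G" "x + v \<in> G" using SA by (auto simp: h_def A_def)
    then show "u = v" using inj_onD[OF injf] by fastforce
  qed
  ultimately have "openin (top_of_set V) (h ` S)"
    using invariance_of_domain_subspaces[OF S_open subspace subspace order_refl] h_into by blast
  then have "openin (top_of_set G) ((+) (f x) ` h ` S)"
    by (rule openin_translation_image[OF fxG]) (use h_into in blast)
  moreover have "0 \<in> S"
    using x xG radius_pos subspace by (simp add: S_def A_def subspace_0)
  then have "f x \<in> (+) (f x) ` h ` S" by (force simp: h_def)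
  moreover have "(+) (f x) ` h ` S \<subseteq> f ` U"
    using SA by (auto simp: h_def A_def)
  ultimately show ?thesis by blast
qed

theorem open_map_continuous_inj:
  assumes "continuous_on G f" "f ` G \<subseteq> G" "inj_on f G"
  shows "open_map (top_of_set G) (top_of_set G) f"
  unfolding open_map_def
proof (intro allI impI)
  fix U assume "openin (top_of_set G) U"
  then show "openin (top_of_set G) (f ` U)"
    using continuous_inj_image_neighbourhood[OF assms] by (subst openin_subopen) blast
qed

end

theorem proposition5p7:
  fixes G :: "(real ^ 'n) set"
  assumes G: "additive_subgroup G" and cl: "closed G"
  shows "reversible (subtopology euclidean G)"
  unfolding reversible_def
proof (intro allI impI)
  fix f
  assume "continuous_map (top_of_set G) (top_of_set G) f \<and> bij_betw f (topspace (top_of_set G)) (topspace (top_of_set G))"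
  then have "continuous_on G f" "f ` G \<subseteq> G" "inj_on f G"
    by (auto simp: bij_betw_def)
  obtain r where "r > 0" "\<forall>g\<in>G. norm g < r \<longrightarrow> g \<in> lineality_space G"
    using closed_subgroup_small_in_lineality_space[OF G cl] by blast
  then interpret locally_linear_subgroup G "lineality_space G" r
    using G subspace_lineality_space[OF G] lineality_space_subset by unfold_locales auto
  show "open_map (top_of_set G) (top_of_set G) f"
    by (rule open_map_continuous_inj) fact+
qed

end
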